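(* Let $U$ be a finite universe of $n$ pages, and let $C^0_0=\emptyset$ and $C^1_0,\dots,C^n_0\subseteq U$ be initial configurations with $|C^m_0|=m$ and $C^{m}_0\subset C^{m+1}_0$ for all $0\le m<n$. Then for every request sequence $\sigma$ over $U$, every time $t\ge 0$ and every $1\le m\le n$, we have $C^{m-1}_t(\sigma)\subset C^m_t(\sigma)$.
   Context: Unweighted paging over a finite universe $U$ of $n$ pages with request sequence $\sigma=(\sigma_1,\sigma_2,\dots)$. Fix a total order on $U$ used for tie-breaking. For a page $p$ and time $t$, its next-request time after $t$ is $\min\{s>t:\sigma_s=p\}$ ($=\infty$ if there is none); page $p$ is "farther in the future" than $p'$ at time $t$ if its next-request time is larger, or equal and $p$ comes later in the fixed order. For $1\le m\le n$, $\mathrm{FiF}^m$ (Belady's Farthest-in-Future algorithm with cache size $m$) starts from configuration $C^m_0$ with $|C^m_0|=m$; on request $\sigma_t$, if $\sigma_t$ is in its cache it does nothing, and otherwise it loads $\sigma_t$ and evicts the page of its current cache that is farthest in the future (as of time $t-1$, i.e. among next-request times after $t-1$ excluding the current request page which is being loaded). $C^m_t(\sigma)$ denotes the cache of $\mathrm{FiF}^m$ after serving $\sigma_1,\dots,\sigma_t$, and $C^0_t=\emptyset$ for all $t$. *)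

theory Defs
  imports Main "HOL-Library.Extended_Nat"
begin

text \<open>A request sequence is sigma :: nat => 'a, with requests sigma 1, sigma 2, ...,
  sigma L, where L :: enat is its length (L = infinity for infinite sequences).
  The fixed total order used for tie-breaking is the linorder on 'a.\<close>

definition next_req :: "(nat \<Rightarrow> 'a) \<Rightarrow> enat \<Rightarrow> nat \<Rightarrow> 'a \<Rightarrow> enat" where
  "next_req \<sigma> L t p =
     (if \<exists>s. t < s \<and> enat s \<le> L \<and> \<sigma> s = p
      then enat (LEAST s. t < s \<and> enat s \<le> L \<and> \<sigma> s = p) else \<infinity>)"

definition farther :: "(nat \<Rightarrow> 'a::linorder) \<Rightarrow> enat \<Rightarrow> nat \<Rightarrow> 'a \<Rightarrow> 'a \<Rightarrow> bool" where
  "farther \<sigma> L t p p' \<longleftrightarrow>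
     next_req \<sigma> L t p > next_req \<sigma> L t p' \<or>
     (next_req \<sigma> L t p = next_req \<sigma> L t p' \<and> p > p')"

definition victim :: "(nat \<Rightarrow> 'a::linorder) \<Rightarrow> enat \<Rightarrow> nat \<Rightarrow> 'a set \<Rightarrow> 'a" where
  "victim \<sigma> L t C = (THE p. p \<in> C \<and> (\<forall>q\<in>C. q \<noteq> p \<longrightarrow> farther \<sigma> L t p q))"

text \<open>One step of FiF serving request sigma t (t >= 1); eviction uses next-request
  times after t - 1.\<close>
definition fif_step :: "(nat \<Rightarrow> 'a::linorder) \<Rightarrow> enat \<Rightarrow> nat \<Rightarrow> 'a set \<Rightarrow> 'a set" where
  "fif_step \<sigma> L t C =
     (if \<sigma> t \<in> C then C else insert (\<sigma> t) (C - {victim \<sigma> L (t - 1) C}))"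

fun fif :: "(nat \<Rightarrow> 'a::linorder) \<Rightarrow> enat \<Rightarrow> 'a set \<Rightarrow> nat \<Rightarrow> 'a set" where
  "fif \<sigma> L C0 0 = C0"
| "fif \<sigma> L C0 (Suc t) = fif_step \<sigma> L (Suc t) (fif \<sigma> L C0 t)"

definition cache :: "(nat \<Rightarrow> 'a::linorder) \<Rightarrow> enat \<Rightarrow> (nat \<Rightarrow> 'a set) \<Rightarrow> nat \<Rightarrow> nat \<Rightarrow> 'a set" where
  "cache \<sigma> L Cinit m t = (if m = 0 then {} else fif \<sigma> L (Cinit m) t)"

end

theory Submission
  imports Defs
begin

text \<open>Farthest-in-Future is monotone in the following sense: if B = A \<union> {x} with x \<notin> A
  and A \<noteq> {}, then after one step B' = A' \<union> {y} with y \<notin> A'. If the request lies in A, both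
  caches hit and y = x. If the request is x, or B faults and evicts x, then B' = A \<union> {request}
  while A' misses A's victim v, so y = v. Otherwise both fault, and since B's victim is not x it is
  also A's victim, so y = x. Consecutive initial configurations differ by one page, and the
  configuration of size 1 stays a singleton, so at every time the cache of size m extends
  the cache of size m - 1 by one page.\<close>

lemma farther_asym: "farther \<sigma> L t p q \<Longrightarrow> \<not> farther \<sigma> L t q p"
  unfolding farther_def by auto

lemma farther_trans: "farther \<sigma> L t p q \<Longrightarrow> farther \<sigma> L t q r \<Longrightarrow> farther \<sigma> L t p r"
  unfolding farther_def by auto

lemma farther_total: "p \<noteq> q \<Longrightarrow> farther \<sigma> L t p q \<or> farther \<sigma> L t q p"
  unfolding farther_def by (auto simp: neq_iff)

lemma farthest_exists:
  assumes "finite C" "C \<noteq> {}"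
  shows "\<exists>p\<in>C. \<forall>q\<in>C. q \<noteq> p \<longrightarrow> farther \<sigma> L t p q"
  using assms
proof (induction C rule: finite_ne_induct)
  case (insert a C)
  then obtain p where p: "p \<in> C" "\<forall>q\<in>C. q \<noteq> p \<longrightarrow> farther \<sigma> L t p q" by blast
  from insert.hyps p(1) have "a \<noteq> p" by auto
  then consider "farther \<sigma> L t a p" | "farther \<sigma> L t p a"
    using farther_total by blast
  then show ?case
  proof cases
    case 1
    with p show ?thesis by (metis farther_trans insertE insertI1)
  next
    case 2
    with p show ?thesis by auto
  qed
qed simp

lemma farthest_unique:
  "\<exists>\<^sub>\<le>\<^sub>1p. p \<in> C \<and> (\<forall>q\<in>C. q \<noteq> p \<longrightarrow> farther \<sigma> L t p q)"
proof (rule Uniq_I)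
  fix p p' assume "p \<in> C \<and> (\<forall>q\<in>C. q \<noteq> p \<longrightarrow> farther \<sigma> L t p q)"
    and "p' \<in> C \<and> (\<forall>q\<in>C. q \<noteq> p' \<longrightarrow> farther \<sigma> L t p' q)"
  then show "p = p'" by (metis farther_asym)
qed

lemma victim_eqI:
  assumes "p \<in> C" "\<forall>q\<in>C. q \<noteq> p \<longrightarrow> farther \<sigma> L t p q"
  shows "victim \<sigma> L t C = p"
  unfolding victim_def using assms by (blast intro: the1_equality' farthest_unique)

lemma victim_farthest:
  assumes "finite C" "C \<noteq> {}"
  shows "victim \<sigma> L t C \<in> C"
    and "\<forall>q\<in>C. q \<noteq> victim \<sigma> L t C \<longrightarrow> farther \<sigma> L t (victim \<sigma> L t C) q"
  using farthest_exists[OF assms, of \<sigma> L t] victim_eqI by metis+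

lemma victim_insert_other:
  assumes "finite A" "victim \<sigma> L t (insert x A) \<noteq> x"
  shows "victim \<sigma> L t A = victim \<sigma> L t (insert x A)"
  using victim_farthest[of "insert x A" \<sigma> L t] assms by (intro victim_eqI) auto

lemma finite_fif_step: "finite C \<Longrightarrow> finite (fif_step \<sigma> L t C)"
  unfolding fif_step_def by simp

lemma fif_step_nonempty: "fif_step \<sigma> L t C \<noteq> {}"
  unfolding fif_step_def by auto

lemma fif_step_singleton: "\<exists>y. fif_step \<sigma> L t {x} = {y}"
  using victim_farthest[of "{x}" \<sigma> L "t - 1"] by (auto simp: fif_step_def)

lemma fif_step_insert:
  assumes "finite A" "A \<noteq> {}" "x \<notin> A"
  shows "\<exists>y. y \<notin> fif_step \<sigma> L t A \<and>
    fif_step \<sigma> L t (insert x A) = insert y (fif_step \<sigma> L t A)"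
proof -
  let ?v = "victim \<sigma> L (t - 1) A"
  have v: "?v \<in> A"
    using victim_farthest(1)[OF assms(1,2)] .
  consider "\<sigma> t \<in> A" | "\<sigma> t \<notin> A" "\<sigma> t = x \<or> victim \<sigma> L (t - 1) (insert x A) = x"
    | "\<sigma> t \<notin> insert x A" "victim \<sigma> L (t - 1) (insert x A) \<noteq> x"
    by blast
  then show ?thesis
  proof cases
    case 1
    with assms show ?thesis by (auto simp: fif_step_def)
  next
    case 2
    with v assms show ?thesis
      by (intro exI[of _ ?v]) (auto simp: fif_step_def)
  next
    case 3
    with v assms victim_insert_other[OF assms(1) 3(2)] show ?thesis
      by (intro exI[of _ x]) (auto simp: fif_step_def)
  qed
qed

lemma fif_nonempty: "C0 \<noteq> {} \<Longrightarrow> fif \<sigma> L C0 t \<noteq> {}"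
  by (cases t) (simp_all add: fif_step_nonempty)

lemma finite_fif: "finite C0 \<Longrightarrow> finite (fif \<sigma> L C0 t)"
  by (induction t) (simp_all add: finite_fif_step)

lemma fif_singleton: "\<exists>y. fif \<sigma> L {x} t = {y}"
  by (induction t) (auto simp: fif_step_singleton)

lemma fif_insert:
  assumes "finite A" "A \<noteq> {}" "x \<notin> A"
  shows "\<exists>y. y \<notin> fif \<sigma> L A t \<and> fif \<sigma> L (insert x A) t = insert y (fif \<sigma> L A t)"
proof (induction t)
  case 0
  with assms show ?case by auto
next
  case (Suc t)
  then obtain y where "y \<notin> fif \<sigma> L A t" "fif \<sigma> L (insert x A) t = insert y (fif \<sigma> L A t)"
    by blast
  with fif_step_insert[OF finite_fif[OF assms(1)] fif_nonempty[OF assms(2)]] show ?case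
    by simp
qed

lemma fif_psubset_insert:
  assumes "finite A" "A \<noteq> {}" "x \<notin> A"
  shows "fif \<sigma> L A t \<subset> fif \<sigma> L (insert x A) t"
  using fif_insert[OF assms] by blast

lemma psubset_card_Suc_insert:
  assumes "finite B" "A \<subset> B" "card B = Suc (card A)"
  obtains x where "x \<notin> A" "B = insert x A"
proof -
  have "finite A"
    using assms(1,2) finite_subset by blast
  with assms have "card (B - A) = 1"
    by (simp add: card_Diff_subset)
  then obtain x where "B - A = {x}"
    by (rule card_1_singletonE)
  with assms(2) show ?thesis
    by (intro that[of x]) auto
qed

theorem lemma1:
  fixes U :: "'a::linorder set" and n :: nat and Cinit :: "nat \<Rightarrow> 'a set"
    and \<sigma> :: "nat \<Rightarrow> 'a" and L :: enat
  assumes "finite U" and "card U = n"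
    and "Cinit 0 = {}"
    and "\<forall>m\<le>n. Cinit m \<subseteq> U \<and> card (Cinit m) = m"
    and "\<forall>m<n. Cinit m \<subset> Cinit (Suc m)"
    and "\<forall>s. 1 \<le> s \<and> enat s \<le> L \<longrightarrow> \<sigma> s \<in> U"
  shows "\<forall>t. enat t \<le> L \<longrightarrow> (\<forall>m. 1 \<le> m \<and> m \<le> n \<longrightarrow>
           cache \<sigma> L Cinit (m - 1) t \<subset> cache \<sigma> L Cinit m t)"
proof (intro allI impI, elim conjE)
  fix t m assume "1 \<le> m" "m \<le> n"
  then obtain k where m: "m = Suc k" "k < n"
    by (metis Suc_le_D Suc_le_eq One_nat_def)
  have fin: "finite (Cinit m)"
    using assms(1,4) \<open>m \<le> n\<close> finite_subset by blast
  have card_k: "card (Cinit k) = k"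
    using assms(4) m by simp
  have card: "card (Cinit m) = Suc (card (Cinit k))"
    using assms(4) m card_k by simp
  obtain x where x: "x \<notin> Cinit k" "Cinit m = insert x (Cinit k)"
    using psubset_card_Suc_insert[OF fin _ card] assms(5) m by blast
  show "cache \<sigma> L Cinit (m - 1) t \<subset> cache \<sigma> L Cinit m t"
  proof (cases "k = 0")
    case True
    with fif_singleton[of \<sigma> L x t] show ?thesis
      using x m assms(3) by (auto simp: cache_def)
  next
    case False
    have "finite (Cinit k)" "Cinit k \<noteq> {}"
      using fin x card_k False by auto
    with fif_psubset_insert[OF _ _ x(1)] x m False show ?thesis
      by (simp add: cache_def)
  qed
qed

end
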